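(* Let $\mathbf W=(w_{ij})$ be row-stochastic and compatible with the strongly connected digraph $\mathcal G$ with parameter $\bar m$, and let $(i^k,\mathbf d^k)$ satisfy the asynchrony model with constants $T,D$. Let $\widehat{\mathbf W}^k\in\mathbb R^{(D+2)I\times(D+2)I}$ be the augmented matrices defined in the context. Then for all $k\in\mathbb N_0$: (a) $\widehat{\mathbf W}^k$ is row-stochastic; (b) all entries in the first $I$ columns of $\widehat{\mathbf W}^{k+K_1-1:k}$ are at least $\eta=\bar m^{K_1}$; (c) there exist a constant $C_2>0$ and a sequence of stochastic vectors $\{\boldsymbol\psi^k\}_{k\in\mathbb N_0}\subset\mathbb R^{(D+2)I}$ such that $\|\widehat{\mathbf W}^{k:t}-\mathbf 1\boldsymbol\psi^{t\top}\|\le C_2\rho^{k-t}$ for all $k\ge t\ge0$, with $\rho=(1-\bar m^{K_1})^{1/K_1}$, and $\psi_i^k\ge\eta$ for all $k$ and $i\in\{1,\dots,I\}$.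
   Context: $\mathcal G=(\mathcal V,\mathcal E)$, $\mathcal V=\{1,\dots,I\}$, strongly connected digraph without self-loops, $\mathcal N_i^{\rm in}=\{j:(j,i)\in\mathcal E\}$. Compatibility with parameter $\bar m\in(0,1)$: $w_{ii}\ge\bar m$, $w_{ij}\ge\bar m$ for $(j,i)\in\mathcal E$, $w_{ij}=0$ otherwise. Asynchrony model: $(i^k,\mathbf d^k)$, $i^k\in\mathcal V$, $\mathbf d^k=(d_j^k)_{j\in\mathcal N^{\rm in}_{i^k}}$, every agent appears among $i^k,\dots,i^{k+T-1}$ for all $k$, and $0\le d_j^k\le D$. $K_1=(2I-1)T+ID$. Augmented matrix $\widehat{\mathbf W}^k$ (rows/columns indexed $1,\dots,(D+2)I$): entry $(r,m)$ equals $w_{i^ki^k}$ if $r=m=i^k$; $w_{i^kj}$ if $r=i^k$ and $m=j+(d_j^k+1)I$ for $j\in\mathcal N^{\rm in}_{i^k}$; $1$ if $r=m\in\{1,\dots,2I\}\setminus\{i^k,i^k+I\}$; $1$ if $r\in\{2I+1,\dots,(D+2)I\}\cup\{i^k+I\}$ and $m=r-I$; $0$ otherwise. (This describes the update of the stacked vector $[\mathbf x^{k\top},\mathbf v^{k\top},\mathbf v^{k-1\top},\dots,\mathbf v^{k-D\top}]^\top$.) Products: $\widehat{\mathbf W}^{k:t}=\widehat{\mathbf W}^k\widehat{\mathbf W}^{k-1}\cdots\widehat{\mathbf W}^t$ for $k>t$, $=\widehat{\mathbf W}^t$ for $k=t$. $\|\cdot\|$ is the spectral norm. *)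

theory Defs
  imports "HOL-Analysis.Analysis"
begin

text \<open>Agents are 1..I; matrices/vectors of varying size are functions on nat,
  only the entries with indices in {1..n} being meaningful.\<close>

definition in_nbrs :: "(nat \<times> nat) set \<Rightarrow> nat \<Rightarrow> nat \<Rightarrow> nat set" where
  "in_nbrs E I i = {j \<in> {1..I}. (j, i) \<in> E}"

definition strongly_connected_digraph :: "nat \<Rightarrow> (nat \<times> nat) set \<Rightarrow> bool" where
  "strongly_connected_digraph I E \<longleftrightarrow>
     E \<subseteq> {1..I} \<times> {1..I} \<and> (\<forall>i. (i, i) \<notin> E) \<and>
     (\<forall>i\<in>{1..I}. \<forall>j\<in>{1..I}. (i, j) \<in> E\<^sup>*)"

definition row_stochastic :: "nat \<Rightarrow> (nat \<Rightarrow> nat \<Rightarrow> real) \<Rightarrow> bool" where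
  "row_stochastic n A \<longleftrightarrow>
     (\<forall>r\<in>{1..n}. \<forall>c\<in>{1..n}. A r c \<ge> 0) \<and> (\<forall>r\<in>{1..n}. (\<Sum>c=1..n. A r c) = 1)"

definition stochastic_vec :: "nat \<Rightarrow> (nat \<Rightarrow> real) \<Rightarrow> bool" where
  "stochastic_vec n v \<longleftrightarrow> (\<forall>c\<in>{1..n}. v c \<ge> 0) \<and> (\<Sum>c=1..n. v c) = 1"

definition compatible :: "nat \<Rightarrow> (nat \<times> nat) set \<Rightarrow> real \<Rightarrow> (nat \<Rightarrow> nat \<Rightarrow> real) \<Rightarrow> bool" where
  "compatible I E m W \<longleftrightarrow>
     (\<forall>i\<in>{1..I}. W i i \<ge> m) \<and>
     (\<forall>i\<in>{1..I}. \<forall>j\<in>{1..I}. (j, i) \<in> E \<longrightarrow> W i j \<ge> m) \<and>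
     (\<forall>i\<in>{1..I}. \<forall>j\<in>{1..I}. j \<noteq> i \<and> (j, i) \<notin> E \<longrightarrow> W i j = 0)"

text \<open>ik k = i^k, d k j = d_j^k.\<close>
definition asynchrony :: "nat \<Rightarrow> (nat \<times> nat) set \<Rightarrow> nat \<Rightarrow> nat \<Rightarrow>
    (nat \<Rightarrow> nat) \<Rightarrow> (nat \<Rightarrow> nat \<Rightarrow> nat) \<Rightarrow> bool" where
  "asynchrony I E T D ik d \<longleftrightarrow>
     (\<forall>k. ik k \<in> {1..I}) \<and>
     (\<forall>k. \<forall>i\<in>{1..I}. \<exists>s\<in>{k..<k+T}. ik s = i) \<and>
     (\<forall>k. \<forall>j\<in>in_nbrs E I (ik k). d k j \<le> D)"

definition K1 :: "nat \<Rightarrow> nat \<Rightarrow> nat \<Rightarrow> nat" where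
  "K1 I T D = (2 * I - 1) * T + I * D"

text \<open>Augmented matrix \<open>\<widehat>W^k\<close>, of size (D+2)I. The first case (row i^k) is written as a
  sum of the disjoint cases m = i^k and m = j + (d_j^k+1)I, j an in-neighbour.\<close>
definition Waug :: "nat \<Rightarrow> (nat \<times> nat) set \<Rightarrow> nat \<Rightarrow> (nat \<Rightarrow> nat \<Rightarrow> real) \<Rightarrow>
    (nat \<Rightarrow> nat) \<Rightarrow> (nat \<Rightarrow> nat \<Rightarrow> nat) \<Rightarrow> nat \<Rightarrow> nat \<Rightarrow> nat \<Rightarrow> real" where
  "Waug I E D W ik d k r m =
    (let i = ik k; N = (D + 2) * I in
     if r \<notin> {1..N} \<or> m \<notin> {1..N} then 0
     else if r = i then
       (if m = i then W i i else 0) +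
       (\<Sum>j\<in>in_nbrs E I i. if m = j + (d k j + 1) * I then W i j else 0)
     else if r = m \<and> r \<in> {1..2*I} - {i, i + I} then 1
     else if r \<in> {2*I+1..N} \<union> {i + I} \<and> m = r - I then 1
     else 0)"

definition mmult :: "nat \<Rightarrow> (nat \<Rightarrow> nat \<Rightarrow> real) \<Rightarrow> (nat \<Rightarrow> nat \<Rightarrow> real) \<Rightarrow> nat \<Rightarrow> nat \<Rightarrow> real" where
  "mmult n A B r c = (\<Sum>l=1..n. A r l * B l c)"

text \<open>Waug_prod ... t n = \<open>\<widehat>W^{t+n:t}\<close> = \<open>\<widehat>W^{t+n} \<cdots> \<widehat>W^t\<close>.\<close>
fun Waug_prod :: "nat \<Rightarrow> (nat \<times> nat) set \<Rightarrow> nat \<Rightarrow> (nat \<Rightarrow> nat \<Rightarrow> real) \<Rightarrow>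
    (nat \<Rightarrow> nat) \<Rightarrow> (nat \<Rightarrow> nat \<Rightarrow> nat) \<Rightarrow> nat \<Rightarrow> nat \<Rightarrow> nat \<Rightarrow> nat \<Rightarrow> real" where
  "Waug_prod I E D W ik d t 0 = Waug I E D W ik d t"
| "Waug_prod I E D W ik d t (Suc n) =
     mmult ((D + 2) * I) (Waug I E D W ik d (t + Suc n)) (Waug_prod I E D W ik d t n)"

definition spec_norm :: "nat \<Rightarrow> (nat \<Rightarrow> nat \<Rightarrow> real) \<Rightarrow> real" where
  "spec_norm n A = Sup {sqrt (\<Sum>r=1..n. (\<Sum>c=1..n. A r c * x c)\<^sup>2) | x.
                          (\<Sum>c=1..n. (x c)\<^sup>2) \<le> 1}"

end

theory Submission
  imports Defs "HOL-Library.Transitive_Closure_Table"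
begin

text \<open>Every row of \<open>\<widehat>W\<^sup>k\<close> except that of the active agent copies a single entry, and the
  active row redistributes row \<open>i\<^sup>k\<close> of \<open>W\<close> over delayed copies; this gives (a).
  An entry \<open>(r, c)\<close> of a product of \<open>K\<close> factors is at least \<open>m\<^sup>K\<close> as soon as a walk leads
  from \<open>c\<close> to \<open>r\<close> through one entry \<open>\<ge> m\<close> per factor. Agents keep weight \<open>\<ge> m\<close> on
  themselves, an edge of the graph is crossed within \<open>2T + D\<close> steps, a shortest path has fewer
  than \<open>I\<close> edges, and every delayed copy is entered within \<open>T + D\<close> further steps: this is
  \<open>K\<^sub>1\<close>, and (b). By (b), each window of \<open>K\<^sub>1\<close> factors puts weight \<open>\<ge> \<eta>\<close> on column 1 of
  every row, so it shrinks the spread \<open>max - min\<close> of each column of the backward product by the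
  factor \<open>1 - \<eta>\<close>. The column minima increase and the maxima decrease to a common stochastic
  limit \<open>\<psi>\<^sup>t\<close>, and the entrywise bound \<open>(1 - \<eta>)\<^bsup>\<lfloor>(k-t)/K\<^sub>1\<rfloor>\<^esup>\<close> gives (c).\<close>

lemma mmult_assoc: "mmult n (mmult n A B) C = mmult n A (mmult n B C)"
proof (intro ext)
  fix r c
  have "mmult n (mmult n A B) C r c = (\<Sum>l=1..n. \<Sum>q=1..n. A r q * B q l * C l c)"
    unfolding mmult_def by (simp add: sum_distrib_right)
  also have "\<dots> = (\<Sum>q=1..n. \<Sum>l=1..n. A r q * B q l * C l c)"
    by (rule sum.swap)
  also have "\<dots> = mmult n A (mmult n B C) r c"
    unfolding mmult_def by (simp add: sum_distrib_left mult.assoc)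
  finally show "mmult n (mmult n A B) C r c = mmult n A (mmult n B C) r c" .
qed

lemma row_stochastic_mmult:
  assumes A: "row_stochastic n A" and B: "row_stochastic n B"
  shows "row_stochastic n (mmult n A B)"
  unfolding row_stochastic_def
proof (intro conjI ballI)
  fix r c assume "r \<in> {1..n}" "c \<in> {1..n}"
  then show "0 \<le> mmult n A B r c"
    using A B unfolding mmult_def row_stochastic_def by (auto intro!: sum_nonneg)
next
  fix r assume r: "r \<in> {1..n}"
  have "(\<Sum>c=1..n. mmult n A B r c) = (\<Sum>l=1..n. \<Sum>c=1..n. A r l * B l c)"
    unfolding mmult_def by (rule sum.swap)
  also have "\<dots> = (\<Sum>l=1..n. A r l * (\<Sum>c=1..n. B l c))"
    by (simp add: sum_distrib_left)
  also have "\<dots> = (\<Sum>l=1..n. A r l)"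
    using B unfolding row_stochastic_def by (intro sum.cong) auto
  also have "\<dots> = 1" using A r unfolding row_stochastic_def by auto
  finally show "(\<Sum>c=1..n. mmult n A B r c) = 1" .
qed

lemma row_stochastic_entry_le_1:
  assumes A: "row_stochastic n A" and r: "r \<in> {1..n}" and c: "c \<in> {1..n}"
  shows "A r c \<le> 1"
proof -
  have "A r c \<le> (\<Sum>l=1..n. A r l)"
    using A r c unfolding row_stochastic_def by (intro member_le_sum) auto
  also have "\<dots> = 1" using A r unfolding row_stochastic_def by auto
  finally show ?thesis .
qed

definition col_max :: "nat \<Rightarrow> (nat \<Rightarrow> nat \<Rightarrow> real) \<Rightarrow> nat \<Rightarrow> real" where
  "col_max n A c = Max ((\<lambda>r. A r c) ` {1..n})"

definition col_min :: "nat \<Rightarrow> (nat \<Rightarrow> nat \<Rightarrow> real) \<Rightarrow> nat \<Rightarrow> real" where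
  "col_min n A c = Min ((\<lambda>r. A r c) ` {1..n})"

lemma col_max_ge: "r \<in> {1..n} \<Longrightarrow> A r c \<le> col_max n A c"
  unfolding col_max_def by (rule Max_ge) auto

lemma col_min_le: "r \<in> {1..n} \<Longrightarrow> col_min n A c \<le> A r c"
  unfolding col_min_def by (rule Min_le) auto

lemma col_max_attained: "1 \<le> n \<Longrightarrow> \<exists>r\<in>{1..n}. col_max n A c = A r c"
  unfolding col_max_def using Max_in[of "(\<lambda>r. A r c) ` {1..n}"] by fastforce

lemma col_min_attained: "1 \<le> n \<Longrightarrow> \<exists>r\<in>{1..n}. col_min n A c = A r c"
  unfolding col_min_def using Min_in[of "(\<lambda>r. A r c) ` {1..n}"] by fastforce

lemma mmult_le_col_max:
  assumes B: "row_stochastic n B" and r: "r \<in> {1..n}" and l: "l \<in> {1..n}" and \<eta>: "\<eta> \<le> B r l"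
  shows "mmult n B A r c \<le> col_max n A c - \<eta> * (col_max n A c - A l c)"
proof -
  let ?M = "col_max n A c"
  have "\<eta> * (?M - A l c) \<le> B r l * (?M - A l c)"
    using \<eta> col_max_ge[OF l] by (intro mult_right_mono) auto
  also have "\<dots> \<le> (\<Sum>q=1..n. B r q * (?M - A q c))"
    using B r l col_max_ge unfolding row_stochastic_def by (intro member_le_sum) auto
  also have "\<dots> = ?M * (\<Sum>q=1..n. B r q) - mmult n B A r c"
    unfolding mmult_def by (simp add: sum_distrib_left algebra_simps sum_subtractf)
  also have "\<dots> = ?M - mmult n B A r c" using B r unfolding row_stochastic_def by simp
  finally show ?thesis by simp
qed

lemma mmult_ge_col_min:
  assumes B: "row_stochastic n B" and r: "r \<in> {1..n}" and l: "l \<in> {1..n}" and \<eta>: "\<eta> \<le> B r l"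
  shows "col_min n A c + \<eta> * (A l c - col_min n A c) \<le> mmult n B A r c"
proof -
  let ?m = "col_min n A c"
  have "\<eta> * (A l c - ?m) \<le> B r l * (A l c - ?m)"
    using \<eta> col_min_le[OF l] by (intro mult_right_mono) auto
  also have "\<dots> \<le> (\<Sum>q=1..n. B r q * (A q c - ?m))"
    using B r l col_min_le unfolding row_stochastic_def by (intro member_le_sum) auto
  also have "\<dots> = mmult n B A r c - ?m * (\<Sum>q=1..n. B r q)"
    unfolding mmult_def by (simp add: sum_distrib_left algebra_simps sum_subtractf)
  also have "\<dots> = mmult n B A r c - ?m" using B r unfolding row_stochastic_def by simp
  finally show ?thesis by simp
qed

lemma col_max_mmult_le:
  assumes "1 \<le> n" and B: "row_stochastic n B"
  shows "col_max n (mmult n B A) c \<le> col_max n A c"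
proof -
  obtain r where "r \<in> {1..n}" "col_max n (mmult n B A) c = mmult n B A r c"
    using col_max_attained assms(1) by blast
  moreover have "0 \<le> B r 1" if "r \<in> {1..n}" for r
    using B that assms(1) unfolding row_stochastic_def by auto
  ultimately show ?thesis using mmult_le_col_max[OF B _ _ , of r 1 0 A c] assms(1) by auto
qed

lemma col_min_mmult_ge:
  assumes "1 \<le> n" and B: "row_stochastic n B"
  shows "col_min n A c \<le> col_min n (mmult n B A) c"
proof -
  obtain r where "r \<in> {1..n}" "col_min n (mmult n B A) c = mmult n B A r c"
    using col_min_attained assms(1) by blast
  moreover have "0 \<le> B r 1" if "r \<in> {1..n}" for r
    using B that assms(1) unfolding row_stochastic_def by auto
  ultimately show ?thesis using mmult_ge_col_min[OF B _ _ , of r 1 0 A c] assms(1) by auto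
qed

lemma col_spread_mmult_le:
  assumes "1 \<le> n" and B: "row_stochastic n B" and l: "l \<in> {1..n}"
    and \<eta>: "\<And>r. r \<in> {1..n} \<Longrightarrow> \<eta> \<le> B r l"
  shows "col_max n (mmult n B A) c - col_min n (mmult n B A) c
           \<le> (1 - \<eta>) * (col_max n A c - col_min n A c)"
proof -
  obtain r where r: "r \<in> {1..n}" "col_max n (mmult n B A) c = mmult n B A r c"
    using col_max_attained assms(1) by blast
  obtain r' where r': "r' \<in> {1..n}" "col_min n (mmult n B A) c = mmult n B A r' c"
    using col_min_attained assms(1) by blast
  show ?thesis
    using mmult_le_col_max[OF B r(1) l \<eta>[OF r(1)], of A c]
      mmult_ge_col_min[OF B r'(1) l \<eta>[OF r'(1)], of A c] r r'
    by (simp add: algebra_simps)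
qed

fun bprod :: "nat \<Rightarrow> (nat \<Rightarrow> nat \<Rightarrow> nat \<Rightarrow> real) \<Rightarrow> nat \<Rightarrow> nat \<Rightarrow> nat \<Rightarrow> nat \<Rightarrow> real" where
  "bprod n A t 0 = A t"
| "bprod n A t (Suc s) = mmult n (A (t + Suc s)) (bprod n A t s)"

lemma Waug_prod_eq_bprod:
  "Waug_prod I E D W ik d t s = bprod ((D + 2) * I) (Waug I E D W ik d) t s"
  by (induction s) simp_all

lemma row_stochastic_bprod:
  "(\<And>t. row_stochastic n (A t)) \<Longrightarrow> row_stochastic n (bprod n A t s)"
  by (induction s) (auto intro: row_stochastic_mmult)

lemma bprod_split: "bprod n A t (Suc a + b) = mmult n (bprod n A (t + Suc a) b) (bprod n A t a)"
proof (induction b)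
  case 0 then show ?case by simp
next
  case (Suc b)
  have "bprod n A t (Suc a + Suc b) = mmult n (A (t + Suc (Suc a + b))) (bprod n A t (Suc a + b))"
    by (simp only: bprod.simps add_Suc_right)
  also have "\<dots> = mmult n (A (t + Suc a + Suc b)) (mmult n (bprod n A (t + Suc a) b) (bprod n A t a))"
    using Suc by (simp add: add.assoc)
  finally show ?case by (simp add: mmult_assoc)
qed

inductive heavy_walk ::
  "nat \<Rightarrow> (nat \<Rightarrow> nat \<Rightarrow> nat \<Rightarrow> real) \<Rightarrow> real \<Rightarrow> nat \<Rightarrow> nat \<Rightarrow> nat \<Rightarrow> nat \<Rightarrow> bool"
  for n A \<mu> where
  heavy_walk_refl: "r \<in> {1..n} \<Longrightarrow> heavy_walk n A \<mu> a a r r"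
| heavy_walk_step: "heavy_walk n A \<mu> a b l c \<Longrightarrow> r \<in> {1..n} \<Longrightarrow> \<mu> \<le> A b r l \<Longrightarrow>
    heavy_walk n A \<mu> a (Suc b) r c"

lemma heavy_walk_indices:
  "heavy_walk n A \<mu> a b r c \<Longrightarrow> a \<le> b \<and> r \<in> {1..n} \<and> c \<in> {1..n}"
  by (induction rule: heavy_walk.induct) auto

lemma heavy_walk_same_time:
  assumes "heavy_walk n A \<mu> a a r c" shows "r = c"
proof -
  have "heavy_walk n A \<mu> a b r c \<Longrightarrow> a = b \<Longrightarrow> r = c" for b
    by (induction rule: heavy_walk.induct) (auto dest: heavy_walk_indices)
  then show ?thesis using assms by blast
qed

lemma heavy_walk_trans:
  "heavy_walk n A \<mu> b e r l \<Longrightarrow> heavy_walk n A \<mu> a b l c \<Longrightarrow> heavy_walk n A \<mu> a e r c"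
  by (induction rule: heavy_walk.induct) (auto intro: heavy_walk_step)

lemma heavy_walk_bprod_ge:
  assumes "heavy_walk n A \<mu> a b r c" "a < b"
    and A: "\<And>t. row_stochastic n (A t)" and \<mu>: "0 \<le> \<mu>"
  shows "\<mu> ^ (b - a) \<le> bprod n A a (b - a - 1) r c"
  using assms(1,2)
proof (induction rule: heavy_walk.induct)
  case (heavy_walk_refl r a) then show ?case by simp
next
  case (heavy_walk_step a b l c r)
  show ?case
  proof (cases "a = b")
    case True
    then show ?thesis using heavy_walk_step heavy_walk_same_time by fastforce
  next
    case False
    then have ab: "a < b" using heavy_walk_indices[OF heavy_walk_step.hyps(1)] by auto
    have l: "l \<in> {1..n}" and c: "c \<in> {1..n}" using heavy_walk_indices[OF heavy_walk_step.hyps(1)] by auto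
    have nonneg: "0 \<le> A b r q * bprod n A a (b - a - 1) q c" if "q \<in> {1..n}" for q
      using A row_stochastic_bprod[OF A] heavy_walk_step.hyps(2) c that
      unfolding row_stochastic_def by (auto intro: mult_nonneg_nonneg)
    have e: "Suc b - a - 1 = Suc (b - a - 1)" "a + Suc (b - a - 1) = b" using ab by auto
    have "\<mu> ^ (Suc b - a) = \<mu> * \<mu> ^ (b - a)" using ab by (simp add: Suc_diff_le)
    also have "\<dots> \<le> A b r l * bprod n A a (b - a - 1) l c"
      using heavy_walk_step.IH[OF ab] heavy_walk_step.hyps(3) \<mu> by (intro mult_mono) auto
    also have "\<dots> \<le> (\<Sum>q=1..n. A b r q * bprod n A a (b - a - 1) q c)"
      using l nonneg by (intro member_le_sum) auto
    also have "\<dots> = bprod n A a (Suc b - a - 1) r c"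
      unfolding e bprod.simps by (simp add: e mmult_def)
    finally show ?thesis .
  qed
qed

lemma spec_norm_le_entrywise:
  assumes \<epsilon>: "0 \<le> \<epsilon>" and A: "\<And>r c. r \<in> {1..n} \<Longrightarrow> c \<in> {1..n} \<Longrightarrow> \<bar>A r c\<bar> \<le> \<epsilon>"
  shows "spec_norm n A \<le> real n * real n * \<epsilon>"
  unfolding spec_norm_def
proof (rule cSup_least)
  show "{sqrt (\<Sum>r=1..n. (\<Sum>c=1..n. A r c * x c)\<^sup>2) | x. (\<Sum>c=1..n. (x c)\<^sup>2) \<le> 1} \<noteq> {}"
    by (auto intro!: exI[of _ "\<lambda>_. 0"])
next
  fix y assume "y \<in> {sqrt (\<Sum>r=1..n. (\<Sum>c=1..n. A r c * x c)\<^sup>2) | x. (\<Sum>c=1..n. (x c)\<^sup>2) \<le> 1}"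
  then obtain x where y: "y = sqrt (\<Sum>r=1..n. (\<Sum>c=1..n. A r c * x c)\<^sup>2)"
    and x: "(\<Sum>c=1..n. (x c)\<^sup>2) \<le> 1" by auto
  have x1: "\<bar>x c\<bar> \<le> 1" if c: "c \<in> {1..n}" for c
  proof -
    have "(x c)\<^sup>2 \<le> (\<Sum>c=1..n. (x c)\<^sup>2)" using c by (intro member_le_sum) auto
    then have "(x c)\<^sup>2 \<le> 1" using x by simp
    then show ?thesis by (simp add: abs_square_le_1)
  qed
  have row: "(\<Sum>c=1..n. A r c * x c)\<^sup>2 \<le> (real n * \<epsilon>)\<^sup>2" if r: "r \<in> {1..n}" for r
  proof -
    have "\<bar>\<Sum>c=1..n. A r c * x c\<bar> \<le> (\<Sum>c=1..n. \<bar>A r c\<bar> * \<bar>x c\<bar>)"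
      unfolding abs_mult[symmetric] by (rule sum_abs)
    also have "\<dots> \<le> (\<Sum>c=1..n. \<epsilon> * 1)"
      using A[OF r] x1 \<epsilon> by (intro sum_mono mult_mono) auto
    finally have "\<bar>\<Sum>c=1..n. A r c * x c\<bar> \<le> real n * \<epsilon>" by simp
    then have "\<bar>\<Sum>c=1..n. A r c * x c\<bar>\<^sup>2 \<le> (real n * \<epsilon>)\<^sup>2" by (rule power_mono) simp
    then show ?thesis by (simp only: power2_abs)
  qed
  have "(\<Sum>r=1..n. (\<Sum>c=1..n. A r c * x c)\<^sup>2) \<le> (\<Sum>r=1..n. (real n * \<epsilon>)\<^sup>2)"
    using row by (rule sum_mono)
  also have "\<dots> = real n * (real n * \<epsilon>)\<^sup>2" by simp
  also have "\<dots> \<le> (real n * real n) * (real n * \<epsilon>)\<^sup>2"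
    by (intro mult_right_mono) (cases n, auto)
  also have "\<dots> = (real n * real n * \<epsilon>)\<^sup>2" by (simp add: power2_eq_square)
  finally have "y \<le> sqrt ((real n * real n * \<epsilon>)\<^sup>2)" unfolding y by (rule real_sqrt_le_mono)
  then show "y \<le> real n * real n * \<epsilon>" using \<epsilon> by simp
qed

lemma power_div_le_powr_power:
  fixes b :: real and K s :: nat
  assumes b: "0 < b" "b < 1" and K: "1 \<le> K"
  shows "b ^ (s div K) \<le> (b powr (1 / real K)) ^ s / b"
proof -
  have "(s div K + 1) * K = s div K * K + K" by simp
  then have "s < (s div K + 1) * K"
    using K div_mult_mod_eq[of s K] mod_less_divisor[of K s] by linarith
  then have le: "real s / real K \<le> real (s div K) + 1"
    using K by (simp add: field_simps flip: of_nat_mult of_nat_add of_nat_less_iff)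
  have "b ^ (s div K) * b = b powr (real (s div K) + 1)"
    using b by (simp add: powr_add powr_realpow)
  also have "\<dots> \<le> b powr (real s / real K)" using le b by (intro powr_mono') auto
  also have "\<dots> = (b powr (1 / real K)) ^ s"
    using b by (simp add: powr_realpow[symmetric] powr_powr)
  finally show ?thesis using b by (simp add: field_simps)
qed

locale scrambling_products =
  fixes n :: nat and A :: "nat \<Rightarrow> nat \<Rightarrow> nat \<Rightarrow> real" and K l :: nat and \<eta> :: real
  assumes n_pos: "1 \<le> n" and row_stochastic_A: "\<And>t. row_stochastic n (A t)"
    and K_pos: "1 \<le> K" and l_index: "l \<in> {1..n}" and \<eta>_pos: "0 < \<eta>"
    and window_ge: "\<And>t r. r \<in> {1..n} \<Longrightarrow> \<eta> \<le> bprod n A t (K - 1) r l"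
begin

lemma bprod_row_stochastic: "row_stochastic n (bprod n A t s)"
  by (rule row_stochastic_bprod[OF row_stochastic_A])

lemma \<eta>_le_1: "\<eta> \<le> 1"
proof -
  have "1 \<in> {1..n}" using n_pos by simp
  then show ?thesis
    using window_ge row_stochastic_entry_le_1[OF bprod_row_stochastic _ l_index] order_trans by blast
qed

lemma col_spread_bprod_le:
  assumes "q * K \<le> s" and c: "c \<in> {1..n}"
  shows "col_max n (bprod n A t s) c - col_min n (bprod n A t s) c \<le> (1 - \<eta>) ^ q"
  using assms(1)
proof (induction q arbitrary: s)
  case 0
  obtain r where r: "r \<in> {1..n}" "col_max n (bprod n A t s) c = bprod n A t s r c"
    using col_max_attained n_pos by blast
  obtain r' where r': "r' \<in> {1..n}" "col_min n (bprod n A t s) c = bprod n A t s r' c"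
    using col_min_attained n_pos by blast
  have "bprod n A t s r c \<le> 1" "0 \<le> bprod n A t s r' c"
    using row_stochastic_entry_le_1[OF bprod_row_stochastic r(1) c] bprod_row_stochastic r'(1) c
    unfolding row_stochastic_def by auto
  then show ?case using r r' by simp
next
  case (Suc q)
  define a where "a = s - K"
  have s: "s = Suc a + (K - 1)" using Suc.prems K_pos unfolding a_def by auto
  have "q * K \<le> a" using Suc.prems unfolding a_def by auto
  then have IH: "col_max n (bprod n A t a) c - col_min n (bprod n A t a) c \<le> (1 - \<eta>) ^ q"
    by (rule Suc.IH)
  have "col_max n (bprod n A t s) c - col_min n (bprod n A t s) c
      \<le> (1 - \<eta>) * (col_max n (bprod n A t a) c - col_min n (bprod n A t a) c)"
    unfolding s bprod_split
    using col_spread_mmult_le[OF n_pos bprod_row_stochastic l_index window_ge] .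
  also have "\<dots> \<le> (1 - \<eta>) * (1 - \<eta>) ^ q" using IH \<eta>_le_1 by (intro mult_left_mono) auto
  finally show ?case by simp
qed

lemma col_min_le_col_max_bprod: "col_min n (bprod n A t s) c \<le> col_max n (bprod n A t s') c"
proof -
  let ?M = "max s s'"
  have "col_min n (bprod n A t s) c \<le> col_min n (bprod n A t ?M) c"
    by (rule lift_Suc_mono_le[of "\<lambda>s. col_min n (bprod n A t s) c"])
      (auto intro: col_min_mmult_ge[OF n_pos row_stochastic_A])
  also have "\<dots> \<le> col_max n (bprod n A t ?M) c"
    using order.trans[OF col_min_le[of 1 n "bprod n A t ?M" c] col_max_ge[of 1 n "bprod n A t ?M" c]]
      n_pos by simp
  also have "\<dots> \<le> col_max n (bprod n A t s') c"
    by (rule lift_Suc_antimono_le[of "\<lambda>s. col_max n (bprod n A t s) c"])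
      (auto intro: col_max_mmult_le[OF n_pos row_stochastic_A])
  finally show ?thesis .
qed

text \<open>The column minima increase and the column maxima decrease along the product, so
  the common limit of the rows is squeezed between them.\<close>

definition limit_vec :: "nat \<Rightarrow> nat \<Rightarrow> real" where
  "limit_vec t c = (SUP s. col_min n (bprod n A t s) c)"

lemma col_min_le_limit_vec: "col_min n (bprod n A t s) c \<le> limit_vec t c"
  unfolding limit_vec_def
  by (rule cSUP_upper) (auto intro: bdd_aboveI2 col_min_le_col_max_bprod)

lemma limit_vec_le_col_max: "limit_vec t c \<le> col_max n (bprod n A t s) c"
  unfolding limit_vec_def by (rule cSUP_least) (auto intro: col_min_le_col_max_bprod)

lemma bprod_limit_vec_dist:
  assumes "r \<in> {1..n}" "c \<in> {1..n}"
  shows "\<bar>bprod n A t s r c - limit_vec t c\<bar> \<le> (1 - \<eta>) ^ (s div K)"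
proof -
  have "\<bar>bprod n A t s r c - limit_vec t c\<bar>
      \<le> col_max n (bprod n A t s) c - col_min n (bprod n A t s) c"
    using col_min_le_limit_vec[of t s c] limit_vec_le_col_max[of t c s]
      col_max_ge[OF assms(1), of "bprod n A t s" c] col_min_le[OF assms(1), of "bprod n A t s" c]
    by (simp add: abs_le_iff)
  also have "\<dots> \<le> (1 - \<eta>) ^ (s div K)"
    using assms(2) by (intro col_spread_bprod_le) simp
  finally show ?thesis .
qed

lemma limit_vec_ge:
  assumes "\<And>r. r \<in> {1..n} \<Longrightarrow> x \<le> bprod n A t s r c"
  shows "x \<le> limit_vec t c"
proof -
  obtain r where "r \<in> {1..n}" "col_min n (bprod n A t s) c = bprod n A t s r c"
    using col_min_attained n_pos by blast
  then show ?thesis using assms col_min_le_limit_vec[of t s c] by force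
qed

lemma limit_vec_stochastic: "stochastic_vec n (limit_vec t)"
  unfolding stochastic_vec_def
proof
  show "\<forall>c\<in>{1..n}. 0 \<le> limit_vec t c"
    using row_stochastic_A by (auto intro!: limit_vec_ge[where s=0] simp: row_stochastic_def)
  let ?S = "\<Sum>c=1..n. limit_vec t c"
  have dist: "\<bar>?S - 1\<bar> \<le> real n * (1 - \<eta>) ^ q" for q
  proof -
    have "(\<Sum>c=1..n. bprod n A t (q * K) 1 c) = 1"
      using bprod_row_stochastic n_pos unfolding row_stochastic_def by auto
    then have "\<bar>?S - 1\<bar> = \<bar>\<Sum>c=1..n. limit_vec t c - bprod n A t (q * K) 1 c\<bar>"
      by (simp add: sum_subtractf)
    also have "\<dots> \<le> (\<Sum>c=1..n. \<bar>bprod n A t (q * K) 1 c - limit_vec t c\<bar>)"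
      by (subst abs_minus_commute) (rule sum_abs)
    also have "\<dots> \<le> (\<Sum>c=1..n. (1 - \<eta>) ^ q)"
      using bprod_limit_vec_dist[of 1 _ t "q * K"] n_pos K_pos by (intro sum_mono) auto
    finally show ?thesis by simp
  qed
  show "?S = 1"
  proof (rule ccontr)
    assume "?S \<noteq> 1"
    then obtain q where "(1 - \<eta>) ^ q < \<bar>?S - 1\<bar> / real n"
      using real_arch_pow_inv[of "\<bar>?S - 1\<bar> / real n" "1 - \<eta>"] \<eta>_pos n_pos by auto
    then show False using dist[of q] n_pos by (simp add: field_simps)
  qed
qed

lemma spec_norm_bprod_minus_limit_vec:
  assumes "\<eta> < 1"
  shows "spec_norm n (\<lambda>r c. bprod n A t s r c - limit_vec t c)
           \<le> real n * real n / (1 - \<eta>) * ((1 - \<eta>) powr (1 / real K)) ^ s"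
proof -
  have "\<bar>bprod n A t s r c - limit_vec t c\<bar> \<le> ((1 - \<eta>) powr (1 / real K)) ^ s / (1 - \<eta>)"
    if "r \<in> {1..n}" "c \<in> {1..n}" for r c
  proof -
    have "(1 - \<eta>) ^ (s div K) \<le> ((1 - \<eta>) powr (1 / real K)) ^ s / (1 - \<eta>)"
      using assms \<eta>_pos K_pos by (intro power_div_le_powr_power) auto
    then show ?thesis using bprod_limit_vec_dist[OF that, of t s] by linarith
  qed
  then have "spec_norm n (\<lambda>r c. bprod n A t s r c - limit_vec t c)
      \<le> real n * real n * (((1 - \<eta>) powr (1 / real K)) ^ s / (1 - \<eta>))"
    using assms by (intro spec_norm_le_entrywise) auto
  then show ?thesis by (simp add: field_simps)
qed

end

locale async_augmented_system =
  fixes I T D :: nat and E :: "(nat \<times> nat) set" and m :: real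
    and W :: "nat \<Rightarrow> nat \<Rightarrow> real" and ik :: "nat \<Rightarrow> nat" and d :: "nat \<Rightarrow> nat \<Rightarrow> nat"
  assumes I_pos: "1 \<le> I"
    and strongly_connected: "strongly_connected_digraph I E"
    and m_pos: "0 < m" and m_less_1: "m < 1"
    and W_row_stochastic: "row_stochastic I W"
    and W_compatible: "compatible I E m W"
    and asynchrony: "asynchrony I E T D ik d"
begin

definition N :: nat where "N = (D + 2) * I"

abbreviation Wa :: "nat \<Rightarrow> nat \<Rightarrow> nat \<Rightarrow> real" where "Wa \<equiv> Waug I E D W ik d"

abbreviation walk :: "nat \<Rightarrow> nat \<Rightarrow> nat \<Rightarrow> nat \<Rightarrow> bool" where "walk \<equiv> heavy_walk N Wa m"

lemma N_eq: "N = I + I + D * I"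
  unfolding N_def by (simp add: algebra_simps)

lemma N_ge: "I \<le> N" "2 * I \<le> N" "1 \<le> N"
  using I_pos unfolding N_eq by auto

lemma edges_in_agents: "E \<subseteq> {1..I} \<times> {1..I}"
  using strongly_connected unfolding strongly_connected_digraph_def by auto

lemma in_nbrs_subset: "in_nbrs E I i \<subseteq> {1..I}"
  unfolding in_nbrs_def by auto

lemma finite_in_nbrs: "finite (in_nbrs E I i)"
  using in_nbrs_subset finite_subset by blast

lemma not_in_nbrs_self: "i \<notin> in_nbrs E I i"
  using strongly_connected unfolding in_nbrs_def strongly_connected_digraph_def by auto

lemma active_agent: "ik k \<in> {1..I}"
  using asynchrony unfolding asynchrony_def by auto

lemma active_within_T: "i \<in> {1..I} \<Longrightarrow> \<exists>s\<in>{k..<k+T}. ik s = i"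
  using asynchrony unfolding asynchrony_def by auto

lemma delay_le: "j \<in> in_nbrs E I (ik k) \<Longrightarrow> d k j \<le> D"
  using asynchrony unfolding asynchrony_def by auto

lemma T_pos: "1 \<le> T"
  using active_within_T[of 1 0] I_pos by auto

lemma K1_eq: "K1 I T D = T + D + (I - 1) * (2 * T + D)"
  using I_pos unfolding K1_def by (cases I) (auto simp: algebra_simps)

lemma K1_pos: "1 \<le> K1 I T D"
  using K1_eq T_pos by auto

text \<open>Index \<open>j + (\<delta> + 1) * I\<close>, \<open>\<delta> \<le> D\<close>, holds the value of agent \<open>j\<close> that is \<open>\<delta>\<close> steps old;
  only the row of the active agent \<open>ik k\<close> mixes, every other row copies one entry.\<close>

lemma delayed_index_in_range:
  assumes "j \<in> {1..I}" "\<delta> \<le> D"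
  shows "j + (\<delta> + 1) * I \<in> {1..N}"
proof -
  have "(\<delta> + 1) * I \<le> (D + 1) * I" using assms by (intro mult_right_mono) auto
  then have "j + (\<delta> + 1) * I \<le> I + (D + 1) * I" using assms(1) by (intro add_mono) auto
  then show ?thesis using assms(1) by (auto simp: N_def algebra_simps)
qed

lemma delayed_index_inj:
  assumes "j \<in> {1..I}" "j' \<in> {1..I}" "j' + x * I = j + y * I"
  shows "j' = j"
proof (cases x y rule: linorder_cases)
  case less
  then obtain e where "y = x + Suc e" using less_iff_Suc_add by auto
  then show ?thesis using assms by (simp add: algebra_simps)
next
  case greater
  then obtain e where "x = y + Suc e" using less_iff_Suc_add by auto
  then show ?thesis using assms by (simp add: algebra_simps)
qed (use assms in simp)

lemma Waug_passive_row:
  assumes r: "r \<in> {1..N}" and c: "c \<in> {1..N}" and inactive: "r \<noteq> ik k"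
  shows "Wa k r c = (if c = (if r \<in> {1..2*I} - {ik k, ik k + I} then r else r - I) then 1 else 0)"
proof (cases "r \<in> {1..2*I} - {ik k, ik k + I}")
  case True
  then show ?thesis using r c inactive unfolding Waug_def Let_def N_def by auto
next
  case False
  then have "r \<in> {2*I+1..N} \<union> {ik k + I}" using r inactive by auto
  moreover have "r - I \<noteq> r" using r I_pos by auto
  ultimately show ?thesis using False r c inactive unfolding Waug_def Let_def N_def by auto
qed

lemma Waug_active_row:
  assumes "c \<in> {1..N}"
  shows "Wa k (ik k) c = (if c = ik k then W (ik k) (ik k) else 0) +
       (\<Sum>j\<in>in_nbrs E I (ik k). if c = j + (d k j + 1) * I then W (ik k) j else 0)"
  using assms active_agent[of k] unfolding Waug_def Let_def N_def by auto

lemma W_nonneg: "i \<in> {1..I} \<Longrightarrow> j \<in> {1..I} \<Longrightarrow> 0 \<le> W i j"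
  using W_row_stochastic unfolding row_stochastic_def by auto

lemma W_row_sum_nbrs:
  assumes i: "i \<in> {1..I}"
  shows "W i i + (\<Sum>j\<in>in_nbrs E I i. W i j) = 1"
proof -
  have "(\<Sum>c=1..I. W i c) = (\<Sum>c\<in>insert i (in_nbrs E I i). W i c)"
  proof (rule sum.mono_neutral_right)
    show "\<forall>c\<in>{1..I} - insert i (in_nbrs E I i). W i c = 0"
      using W_compatible i unfolding compatible_def in_nbrs_def by auto
  qed (use i in_nbrs_subset in auto)
  then show ?thesis
    using W_row_stochastic i not_in_nbrs_self finite_in_nbrs unfolding row_stochastic_def by simp
qed

lemma Waug_nonneg:
  assumes r: "r \<in> {1..N}" and c: "c \<in> {1..N}"
  shows "0 \<le> Wa k r c"
proof (cases "r = ik k")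
  case True
  have "0 \<le> W (ik k) (ik k)" "\<forall>j\<in>in_nbrs E I (ik k). 0 \<le> W (ik k) j"
    using W_nonneg active_agent in_nbrs_subset by blast+
  then show ?thesis using True Waug_active_row[OF c, of k]
    by (auto intro!: add_nonneg_nonneg sum_nonneg)
next
  case False
  then show ?thesis using Waug_passive_row[OF r c False] by auto
qed

lemma Waug_row_sum:
  assumes r: "r \<in> {1..N}"
  shows "(\<Sum>c=1..N. Wa k r c) = 1"
proof (cases "r = ik k")
  case True
  let ?i = "ik k"
  have "(\<Sum>c=1..N. Wa k r c) = (\<Sum>c=1..N. (if c = ?i then W ?i ?i else 0)) +
       (\<Sum>c=1..N. \<Sum>j\<in>in_nbrs E I ?i. if c = j + (d k j + 1) * I then W ?i j else 0)"
    using True Waug_active_row by (simp add: sum.distrib)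
  also have "(\<Sum>c=1..N. (if c = ?i then W ?i ?i else 0)) = W ?i ?i"
    using active_agent[of k] N_ge by (auto simp: sum.delta)
  also have "(\<Sum>c=1..N. \<Sum>j\<in>in_nbrs E I ?i. if c = j + (d k j + 1) * I then W ?i j else 0)
      = (\<Sum>j\<in>in_nbrs E I ?i. \<Sum>c=1..N. if c = j + (d k j + 1) * I then W ?i j else 0)"
    by (rule sum.swap)
  also have "\<dots> = (\<Sum>j\<in>in_nbrs E I ?i. W ?i j)"
  proof (rule sum.cong[OF refl])
    fix j assume j: "j \<in> in_nbrs E I ?i"
    then have "j + (d k j + 1) * I \<in> {1..N}"
      using delayed_index_in_range delay_le in_nbrs_subset by blast
    then show "(\<Sum>c=1..N. if c = j + (d k j + 1) * I then W ?i j else 0) = W ?i j"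
      by (simp add: sum.delta')
  qed
  finally show ?thesis using W_row_sum_nbrs[OF active_agent] by simp
next
  case False
  let ?t = "if r \<in> {1..2*I} - {ik k, ik k + I} then r else r - I"
  have "?t \<in> {1..N}"
  proof (cases "r \<in> {1..2*I} - {ik k, ik k + I}")
    case False
    then have "I < r" using r \<open>r \<noteq> ik k\<close> active_agent[of k] by auto
    then show ?thesis using False r by auto
  qed (use r in auto)
  then have "(\<Sum>c=1..N. Wa k r c) = (\<Sum>c=1..N. if c = ?t then 1 else 0)"
    using Waug_passive_row[OF r _ False] by (intro sum.cong) auto
  also have "\<dots> = 1" using \<open>?t \<in> {1..N}\<close> by (simp add: sum.delta')
  finally show ?thesis .
qed

lemma Waug_row_stochastic: "row_stochastic N (Wa k)"
  unfolding row_stochastic_def using Waug_nonneg Waug_row_sum by auto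

lemma Waug_agent_diag_ge:
  assumes c: "c \<in> {1..I}"
  shows "m \<le> Wa s c c"
proof (cases "c = ik s")
  case True
  have "c \<noteq> j + (d s j + 1) * I" if "j \<in> in_nbrs E I (ik s)" for j
    using that in_nbrs_subset c by fastforce
  then have "Wa s c c = W c c"
    using Waug_active_row[of c s] c N_ge unfolding True[symmetric] by simp
  then show ?thesis using W_compatible c unfolding compatible_def by auto
next
  case False
  then show ?thesis
    using Waug_passive_row[of c c s] c N_ge m_less_1 active_agent[of s] by auto
qed

lemma Waug_copy_keep: "j \<in> {1..I} \<Longrightarrow> ik s \<noteq> j \<Longrightarrow> Wa s (j + I) (j + I) = 1"
  using Waug_passive_row[of "j + I" "j + I" s] N_ge active_agent[of s] by auto

lemma Waug_copy_update: "j \<in> {1..I} \<Longrightarrow> ik s = j \<Longrightarrow> Wa s (j + I) j = 1"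
  using Waug_passive_row[of "j + I" j s] N_ge active_agent[of s] I_pos by auto

lemma Waug_delay_shift:
  assumes "r \<in> {2*I+1..N}" shows "Wa s r (r - I) = 1"
proof -
  have "r - I \<in> {1..N}" using assms by auto
  then show ?thesis using assms Waug_passive_row[of r "r - I" s] active_agent[of s] I_pos by auto
qed

lemma Waug_delayed_nbr_ge:
  assumes j: "j \<in> in_nbrs E I (ik s)"
  shows "m \<le> Wa s (ik s) (j + (d s j + 1) * I)"
proof -
  let ?i = "ik s"
  have jI: "j \<in> {1..I}" using j in_nbrs_subset by blast
  have cN: "j + (d s j + 1) * I \<in> {1..N}"
    using delayed_index_in_range[OF jI delay_le[OF j]] .
  have "(\<Sum>j'\<in>in_nbrs E I ?i. if j + (d s j + 1) * I = j' + (d s j' + 1) * I then W ?i j' else 0)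
      = (\<Sum>j'\<in>in_nbrs E I ?i. if j' = j then W ?i j' else 0)"
  proof (rule sum.cong[OF refl])
    fix j' assume "j' \<in> in_nbrs E I ?i"
    then have "j' \<in> {1..I}" using in_nbrs_subset by blast
    then show "(if j + (d s j + 1) * I = j' + (d s j' + 1) * I then W ?i j' else 0)
        = (if j' = j then W ?i j' else 0)"
      using delayed_index_inj[of j' j "d s j + 1" "d s j' + 1"] jI by auto
  qed
  also have "\<dots> = W ?i j" using j finite_in_nbrs by (simp add: sum.delta')
  finally have "Wa s ?i (j + (d s j + 1) * I) = W ?i j"
    using Waug_active_row[OF cN, of s] active_agent[of s] jI by simp
  moreover have "m \<le> W ?i j"
    using W_compatible j active_agent[of s] unfolding compatible_def in_nbrs_def by auto
  ultimately show ?thesis by simp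
qed

lemma walk_stay:
  assumes "c \<in> {1..I}" "a \<le> b"
  shows "walk a b c c"
  using assms(2)
proof (induction b)
  case 0 then show ?case using assms(1) N_ge by (auto intro: heavy_walk_refl)
next
  case (Suc b)
  show ?case
  proof (cases "a = Suc b")
    case True then show ?thesis using assms(1) N_ge by (auto intro: heavy_walk_refl)
  next
    case False
    then show ?thesis
      using Suc assms(1) N_ge Waug_agent_diag_ge by (auto intro: heavy_walk_step)
  qed
qed

lemma walk_copy:
  assumes j: "j \<in> {1..I}" and "\<exists>s\<in>{a..<b}. ik s = j"
  shows "walk a b (j + I) j"
  using assms(2)
proof (induction b)
  case 0 then show ?case by auto
next
  case (Suc b)
  have jN: "j + I \<in> {1..N}" using j N_ge by auto
  show ?case
  proof (cases "ik b = j")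
    case True
    then have "walk a b j j" using Suc.prems j walk_stay by auto
    then show ?thesis using Waug_copy_update[OF j True] m_less_1 jN by (intro heavy_walk_step) auto
  next
    case False
    then have "\<exists>s\<in>{a..<b}. ik s = j" using Suc.prems less_Suc_eq by auto
    then have "walk a b (j + I) j" by (rule Suc.IH)
    then show ?thesis using Waug_copy_keep[OF j False] m_less_1 jN by (intro heavy_walk_step) auto
  qed
qed

lemma walk_delay:
  assumes j: "j \<in> {1..I}" and "\<delta> \<le> D" and "walk a b (j + I) c"
  shows "walk a (b + \<delta>) (j + (\<delta> + 1) * I) c"
  using assms(2)
proof (induction \<delta>)
  case 0 then show ?case using assms(3) by simp
next
  case (Suc \<delta>)
  have r: "j + (Suc \<delta> + 1) * I \<in> {2*I+1..N}"
    using delayed_index_in_range[OF j Suc.prems] j by auto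
  have "j + (Suc \<delta> + 1) * I - I = j + (\<delta> + 1) * I" by simp
  then show ?case
    using Suc Waug_delay_shift[OF r, of "b + \<delta>"] m_less_1 r by (auto intro: heavy_walk_step)
qed

text \<open>Agent \<open>j\<close> is read by its out-neighbour \<open>i\<close> after a delay of at most \<open>D\<close>, and both are
  active at least once every \<open>T\<close> steps: one edge costs at most \<open>2T + D\<close> steps.\<close>

lemma walk_edge:
  assumes E: "(j, i) \<in> E" and "a + (2 * T + D) \<le> b"
  shows "walk a b i j"
proof -
  have i: "i \<in> {1..I}" and jI: "j \<in> {1..I}" using E edges_in_agents by auto
  have "b - T + T = b" using assms(2) by simp
  then obtain s where s: "s \<in> {b - T..<b}" "ik s = i" using active_within_T[OF i, of "b - T"] by metis
  have jn: "j \<in> in_nbrs E I (ik s)" using E jI s unfolding in_nbrs_def by auto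
  define \<delta> where "\<delta> = d s j"
  have \<delta>: "\<delta> \<le> D" using delay_le jn \<delta>_def by blast
  have "s - \<delta> - T + T = s - \<delta>" using s assms(2) \<delta> by auto
  then obtain s' where s': "s' \<in> {s - \<delta> - T..<s - \<delta>}" "ik s' = j"
    using active_within_T[OF jI, of "s - \<delta> - T"] by metis
  have "s' \<in> {a..<s - \<delta>}" using s s' assms(2) \<delta> by auto
  then have "walk a (s - \<delta>) (j + I) j" using walk_copy jI s' by blast
  then have "walk a (s - \<delta> + \<delta>) (j + (\<delta> + 1) * I) j" using walk_delay jI \<delta> by blast
  moreover have "s - \<delta> + \<delta> = s" using s assms(2) \<delta> by auto
  ultimately have "walk a (Suc s) i j"
    using Waug_delayed_nbr_ge[OF jn] s i N_ge unfolding \<delta>_def by (auto intro: heavy_walk_step)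
  moreover have "walk (Suc s) b i i" using walk_stay i s by auto
  ultimately show ?thesis using heavy_walk_trans by blast
qed

lemma walk_path:
  assumes "rtrancl_path (\<lambda>u v. (u, v) \<in> E) c js j" and "c \<in> {1..I}"
    and "a + length js * (2 * T + D) \<le> b"
  shows "walk a b j c"
  using assms
proof (induction arbitrary: a rule: rtrancl_path.induct)
  case (base x) then show ?case using walk_stay by auto
next
  case (step x y ys z)
  have "walk a (a + (2 * T + D)) y x" using walk_edge step.hyps(1) by simp
  moreover have "walk (a + (2 * T + D)) b z y"
    using step.IH step.hyps(1) step.prems(2) edges_in_agents by (auto simp: algebra_simps)
  ultimately show ?case using heavy_walk_trans by blast
qed

lemma exists_short_path:
  assumes "(c, j) \<in> E\<^sup>*" "c \<in> {1..I}"
  obtains js where "rtrancl_path (\<lambda>u v. (u, v) \<in> E) c js j" "length js < I"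
proof -
  obtain js where "rtrancl_path (\<lambda>u v. (u, v) \<in> E) c js j"
    using assms(1) rtranclp_eq_rtrancl_path by (fastforce simp: rtrancl_def)
  then obtain js' where path: "rtrancl_path (\<lambda>u v. (u, v) \<in> E) c js' j" "distinct (c # js')"
    by (rule rtrancl_path_distinct)
  have "set (c # js') \<subseteq> {1..I}"
    using assms(2) rtrancl_path_Range[OF path(1)] edges_in_agents by auto
  then have "card (set (c # js')) \<le> card {1..I}" by (intro card_mono) auto
  then have "length (c # js') \<le> I" using distinct_card[OF path(2)] by simp
  then show ?thesis using that path(1) by simp
qed

lemma walk_to_index:
  assumes r: "r \<in> {1..N}" and ab: "a + D + T \<le> b"
  shows "\<exists>j\<in>{1..I}. walk a b r j"
proof -
  define j where "j = (r - 1) mod I + 1"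
  define q where "q = (r - 1) div I"
  have jI: "j \<in> {1..I}" unfolding j_def using I_pos by (auto simp: Suc_le_eq)
  have rq: "r = j + q * I" unfolding j_def q_def using r by (simp add: algebra_simps)
  have "r - 1 < (D + 2) * I" using r by (auto simp: N_def)
  then have "q < D + 2" unfolding q_def by (metis less_mult_imp_div_less)
  show ?thesis
  proof (cases q)
    case 0
    have "walk a b j j" using walk_stay jI ab by auto
    then show ?thesis using rq 0 jI by auto
  next
    case (Suc \<delta>)
    then have \<delta>: "\<delta> \<le> D" using \<open>q < D + 2\<close> by auto
    have "b - \<delta> - T + T = b - \<delta>" using ab \<delta> by auto
    then obtain s' where s': "s' \<in> {b - \<delta> - T..<b - \<delta>}" "ik s' = j"
      using active_within_T[OF jI, of "b - \<delta> - T"] by metis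
    moreover have "s' \<in> {a..<b - \<delta>}" using s' ab \<delta> by auto
    ultimately have "walk a (b - \<delta>) (j + I) j" using walk_copy jI by blast
    then have "walk a (b - \<delta> + \<delta>) (j + (\<delta> + 1) * I) j" using walk_delay jI \<delta> by blast
    moreover have "b - \<delta> + \<delta> = b" using ab \<delta> by auto
    ultimately show ?thesis using rq Suc jI by auto
  qed
qed

lemma bprod_window_ge:
  assumes r: "r \<in> {1..N}" and c: "c \<in> {1..I}"
  shows "m ^ K1 I T D \<le> bprod N Wa k (K1 I T D - 1) r c"
proof -
  let ?mid = "k + (I - 1) * (2 * T + D)" and ?b = "k + K1 I T D"
  obtain j where j: "j \<in> {1..I}" "walk ?mid ?b r j"
    using walk_to_index[OF r, of ?mid ?b] K1_eq by auto
  obtain js where js: "rtrancl_path (\<lambda>u v. (u, v) \<in> E) c js j" "length js < I"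
    using exists_short_path c j(1) strongly_connected unfolding strongly_connected_digraph_def
    by blast
  have "length js * (2 * T + D) \<le> (I - 1) * (2 * T + D)" using js(2) by (intro mult_right_mono) auto
  then have "walk k ?mid j c" using walk_path[OF js(1) c] by auto
  then have "walk k ?b r c" using j(2) heavy_walk_trans by blast
  then show ?thesis
    using heavy_walk_bprod_ge[OF _ _ Waug_row_stochastic] K1_pos m_pos by fastforce
qed

end

theorem lemma5:
  fixes I T D :: nat and E :: "(nat \<times> nat) set" and m :: real
    and W :: "nat \<Rightarrow> nat \<Rightarrow> real" and ik :: "nat \<Rightarrow> nat" and d :: "nat \<Rightarrow> nat \<Rightarrow> nat"
  assumes "I \<ge> 1"
    and "strongly_connected_digraph I E"
    and "0 < m" and "m < 1"
    and "row_stochastic I W"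
    and "compatible I E m W"
    and "asynchrony I E T D ik d"
  shows "(\<forall>k. row_stochastic ((D + 2) * I) (Waug I E D W ik d k))
       \<and> (\<forall>k. \<forall>r\<in>{1..(D + 2) * I}. \<forall>c\<in>{1..I}.
            Waug_prod I E D W ik d k (K1 I T D - 1) r c \<ge> m ^ K1 I T D)
       \<and> (\<exists>C2 > 0. \<exists>\<psi> :: nat \<Rightarrow> nat \<Rightarrow> real.
            (\<forall>k. stochastic_vec ((D + 2) * I) (\<psi> k))
          \<and> (\<forall>k t. t \<le> k \<longrightarrow>
               spec_norm ((D + 2) * I) (\<lambda>r c. Waug_prod I E D W ik d t (k - t) r c - \<psi> t c)
                 \<le> C2 * ((1 - m ^ K1 I T D) powr (1 / real (K1 I T D))) ^ (k - t))
          \<and> (\<forall>k. \<forall>i\<in>{1..I}. \<psi> k i \<ge> m ^ K1 I T D))"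
proof -
  interpret async_augmented_system I T D E m W ik d
    using assms by unfold_locales
  let ?K = "K1 I T D"
  interpret S: scrambling_products N Wa ?K 1 "m ^ ?K"
    using N_ge(3) Waug_row_stochastic K1_pos bprod_window_ge I_pos m_pos by unfold_locales auto
  have "m ^ ?K < 1" using m_pos m_less_1 K1_pos by (simp add: power_less_one_iff)
  then have "0 < real N * real N / (1 - m ^ ?K)" using N_ge(3) by simp
  moreover have "m ^ ?K \<le> S.limit_vec t i" if "i \<in> {1..I}" for t i
    using bprod_window_ge that by (intro S.limit_vec_ge)
  ultimately show ?thesis
    unfolding Waug_prod_eq_bprod N_def[symmetric]
    using Waug_row_stochastic bprod_window_ge S.limit_vec_stochastic
      S.spec_norm_bprod_minus_limit_vec[OF \<open>m ^ ?K < 1\<close>] by blast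
qed

end
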